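(* There exists a system (ground truth $\bar A$, basis function $f$, and attack model following the probabilistic attack model with parameter $p\in(0,1)$) satisfying Assumptions (A3), (A4) and (A6) such that for every $T\ge1$, with probability at least $p[1-(1-p)^{T-1}]$, $\bar A$ is not a global minimizer of $\min_{A}\sum_{t=0}^{T-1}\|x_{t+1}-Af(x_t)\|_2$. (For instance, with $m=n$: $\bar A=\rho I_n$ for a constant $\rho\ge 2+\sqrt6$, $f(x)=x$, and, conditional on $\mathcal F_t$ and $\bar d_t\neq0$, $\bar d_t$ uniformly distributed on the unit sphere $\{d\in\mathbb{R}^n:\|d\|_2=1\}$.)
   Context: System: $x_0=0_n$, $x_{t+1}=\bar A f(x_t)+\bar d_t$ for $t=0,\dots,T-1$. Filtration $\mathcal F_t:=\sigma\{x_0,\dots,x_t\}$. Probabilistic attack model: for each $t$, $\bar d_t\neq 0$ with probability $p$, independently across time. (A3) Conditional on $\mathcal F_t$ and $\bar d_t\ne0_n$, $\lambda_{\min}\big(\mathbb{E}[f(x+\bar d_t)f(x+\bar d_t)^\top\mid\mathcal F_t,\bar d_t\ne0_n]\big)\ge\lambda^2$ for all $x$, some $\lambda>0$. (A4) $f(0_n)=0_m$ and $f$ is $L$-Lipschitz in $\ell_2$. (A6) Conditional on $\mathcal F_t$ and $\bar d_t\ne0_n$: $\bar d_t=\ell_t\hat d_t$ with $\hat d_t,\ell_t$ conditionally independent, $\|\hat d_t\|_2=1$, $\hat d_t$ conditionally zero-mean, and $\ell_t$ zero-mean sub-Gaussian with parameter $\sigma$. The stability condition $\|\bar A\|_2<1/L$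 is violated by the construction. *)

theory Defs
  imports "HOL-Analysis.Analysis" "HOL-Probability.Probability"
begin

primrec traj :: "real^'m^'n \<Rightarrow> (real^'n \<Rightarrow> real^'m) \<Rightarrow> (nat \<Rightarrow> 'a \<Rightarrow> real^'n)
                 \<Rightarrow> nat \<Rightarrow> 'a \<Rightarrow> real^'n" where
  "traj A f d 0 w = 0"
| "traj A f d (Suc t) w = A *v f (traj A f d t w) + d t w"

text \<open>Sigma-algebra generated by x_0, ..., x_t together with the event {d_t \<noteq> 0}:
  conditioning on it, on the event d_t \<noteq> 0, is conditioning on F_t and d_t \<noteq> 0.\<close>
definition condalg :: "'a measure \<Rightarrow> real^'m^'n \<Rightarrow> (real^'n \<Rightarrow> real^'m)
                     \<Rightarrow> (nat \<Rightarrow> 'a \<Rightarrow> real^'n) \<Rightarrow> nat \<Rightarrow> 'a measure" where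
  "condalg M A f d t = sigma (space M)
     ({traj A f d s -` B \<inter> space M | s B. s \<le> t \<and> B \<in> sets borel}
      \<union> {{w \<in> space M. d t w \<noteq> 0}})"

text \<open>Minimal eigenvalue of a square real matrix (used for symmetric matrices,
  whose eigenvalues are real).\<close>
definition lambda_min :: "real^'n^'n \<Rightarrow> real" where
  "lambda_min S = Min {mu. \<exists>v. v \<noteq> 0 \<and> S *v v = mu *\<^sub>R v}"

text \<open>"P holds for the conditional expectation given G, conditional on event B":
  almost surely on B.\<close>
definition cond_on :: "'a measure \<Rightarrow> ('a \<Rightarrow> bool) \<Rightarrow> ('a \<Rightarrow> bool) \<Rightarrow> bool" where
  "cond_on M B P \<longleftrightarrow> (AE w in M. B w \<longrightarrow> P w)"

definition cond_indep_on :: "'a measure \<Rightarrow> 'a measure \<Rightarrow> ('a \<Rightarrow> bool)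
      \<Rightarrow> ('a \<Rightarrow> 'b::topological_space) \<Rightarrow> ('a \<Rightarrow> 'c::topological_space) \<Rightarrow> bool" where
  "cond_indep_on M G B X Y \<longleftrightarrow>
     (\<forall>S \<in> sets borel. \<forall>U \<in> sets borel. cond_on M B (\<lambda>w.
        real_cond_exp M G (\<lambda>w. indicator (X -` S) w * indicator (Y -` U) w) w
        = real_cond_exp M G (indicator (X -` S)) w * real_cond_exp M G (indicator (Y -` U)) w))"

definition cost :: "real^'m^'n \<Rightarrow> (real^'n \<Rightarrow> real^'m) \<Rightarrow> (nat \<Rightarrow> 'a \<Rightarrow> real^'n)
                    \<Rightarrow> real^'m^'n \<Rightarrow> nat \<Rightarrow> 'a \<Rightarrow> real" where
  "cost Abar f d A T w = (\<Sum>t<T. norm (traj Abar f d (Suc t) w - A *v f (traj Abar f d t w)))"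

end

(*
  Take Abar = 4 I and f = id, and let each attack d_t be, with probability p and independently
  of the past, a Rademacher sign times a uniformly random signed unit coordinate vector +-e_k.
  Given the past and d_t <> 0, the second moment matrix of x + d_t is x x^T + I/n, which gives
  (A3) with lambda^2 = 1/n; the sign has E exp (s l) = cosh s <= exp (s^2/2), which gives (A6).

  Since every attack has norm at most 1 and the gain is 4, once the state is nonzero it is at
  least twice the sum of the norms of all earlier states. If d_(T-1) <> 0 and d_k <> 0 for some
  k < T - 1, then x_(T-1) <> 0, and the rank-one perturbation
  A = Abar + d_(T-1) x_(T-1)^T / |x_(T-1)|^2 cancels the last residual (of norm 1) while adding
  at most |x_t| / |x_(T-1)| to each earlier residual, less than 1 in total. So Abar is not a
  minimizer on this event, which has probability p (1 - (1 - p)^(T-1)).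
*)

theory Submission
  imports Defs
begin

lemma real_cond_exp_indep_var:
  fixes h :: "'c \<Rightarrow> real"
  assumes "prob_space M" and G: "subalgebra M G"
    and indep: "prob_space.indep_var M N Y P Z"
    and G_le_Y: "sets G \<subseteq> sets (vimage_algebra (space M) Y N)"
    and h: "h \<in> borel_measurable P" and int: "integrable M (\<lambda>w. h (Z w))"
  shows "AE w in M. real_cond_exp M G (\<lambda>w. h (Z w)) w = (\<integral>w. h (Z w) \<partial>M)"
proof -
  interpret prob_space M by fact
  interpret finite_measure_subalgebra M G by unfold_locales (rule G)
  show ?thesis
  proof (rule real_cond_exp_charact)
    fix A assume A: "A \<in> sets G"
    have Y: "Y \<in> space M \<rightarrow> space N"
      using indep_var_rv1[OF indep] by (simp add: measurable_def)
    obtain S where S: "S \<in> sets N" "A = Y -` S \<inter> space M"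
      using G_le_Y A sets_vimage_algebra2[OF Y] by blast
    have A_M: "A \<in> sets M" using A G by (auto simp: subalgebra_def)
    have indep_S: "indep_var borel (indicator S \<circ> Y) borel (h \<circ> Z)"
      by (rule indep_var_compose[OF indep borel_measurable_indicator[OF S(1)] h])
    have int_S: "integrable M (\<lambda>x. indicator S (Y x) :: real)"
      using indep_var_rv1[OF indep] S(1) by (intro integrable_const_bound[where B=1]) auto
    have "(\<integral>x\<in>A. h (Z x) \<partial>M) = (\<integral>x. indicator S (Y x) * h (Z x) \<partial>M)"
      unfolding set_lebesgue_integral_def
      by (rule Bochner_Integration.integral_cong) (simp_all add: S indicator_def)
    also have "\<dots> = (\<integral>x. indicator S (Y x) \<partial>M) * (\<integral>x. h (Z x) \<partial>M)"
      using indep_var_lebesgue_integral[OF indep_S] int_S int by (simp add: comp_def)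
    also have "(\<integral>x. indicator S (Y x) \<partial>M) = (\<integral>x. indicator A x \<partial>M)"
      by (rule Bochner_Integration.integral_cong) (simp_all add: S indicator_def)
    finally show "(\<integral>x\<in>A. h (Z x) \<partial>M) = (\<integral>x\<in>A. (\<integral>w. h (Z w) \<partial>M) \<partial>M)"
      using A_M by (simp add: set_integral_const)
  qed (simp_all add: int)
qed

lemma sets_Collect_ex_less_continuous:
  fixes g :: "'b::second_countable_topology \<Rightarrow> 'a \<Rightarrow> real"
  assumes g: "\<And>A. g A \<in> borel_measurable M" and cont: "\<And>w. continuous_on UNIV (\<lambda>A. g A w)"
    and h: "h \<in> borel_measurable M"
  shows "{w \<in> space M. \<exists>A. g A w < h w} \<in> sets M"
proof -
  obtain D :: "'b set" where D: "countable D" "\<And>X. open X \<Longrightarrow> X \<noteq> {} \<Longrightarrow> \<exists>d\<in>D. d \<in> X"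
    using countable_dense_setE by blast
  have "{w \<in> space M. \<exists>A. g A w < h w} = (\<Union>A\<in>D. {w \<in> space M. g A w < h w})"
  proof (intro set_eqI iffI)
    fix w assume "w \<in> {w \<in> space M. \<exists>A. g A w < h w}"
    then obtain A where w: "w \<in> space M" "g A w < h w" by auto
    have "open {B. g B w < h w}"
      using cont by (intro open_Collect_less) auto
    with w D(2)[of "{B. g B w < h w}"] show "w \<in> (\<Union>A\<in>D. {w \<in> space M. g A w < h w})"
      by auto
  qed auto
  then show ?thesis
    using D(1) g h by (simp only:) (intro sets.countable_UN'' borel_measurable_less)
qed

lemma matrix_vector_mult_outer:
  "(\<chi> i j. a$i * b$j) *v y = (b \<bullet> y) *\<^sub>R (a::real^'n::finite)"
proof -
  have "(\<Sum>j\<in>UNIV. a$i * b$j * y$j) = a$i * (\<Sum>j\<in>UNIV. b$j * y$j)" for i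
    by (simp add: sum_distrib_left mult.assoc)
  then show ?thesis by (simp add: vec_eq_iff matrix_vector_mult_def inner_vec_def)
qed

lemma matrix_vector_mult_outer_plus_diag:
  "(\<chi> i j. x$i * x$j + (if i = j then c else 0)) *v v = (x \<bullet> v) *\<^sub>R x + c *\<^sub>R (v::real^'n::finite)"
proof -
  have "(\<chi> i j. x$i * x$j + (if i = j then c else 0)) = (\<chi> i j. x$i * x$j) + c *\<^sub>R (mat 1 :: real^'n^'n)"
    by (simp add: vec_eq_iff mat_def)
  then show ?thesis
    by (simp add: matrix_vector_mult_add_rdistrib matrix_vector_mult_outer
        flip: scaleR_matrix_vector_assoc)
qed

lemma lambda_min_outer_plus_diag_ge:
  fixes x :: "real^'n::finite"
  shows "lambda_min (\<chi> i j. x$i * x$j + (if i = j then c else 0)) \<ge> c"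
proof -
  let ?S = "(\<chi> i j. x$i * x$j + (if i = j then c else 0)) :: real^'n^'n"
  let ?E = "{\<mu>. \<exists>v. v \<noteq> 0 \<and> ?S *v v = \<mu> *\<^sub>R v}"
  have eigenvalue: "c \<le> \<mu> \<and> (\<mu> = c \<or> \<mu> = x \<bullet> x + c)" if "\<mu> \<in> ?E" for \<mu>
  proof -
    from that obtain v where v: "v \<noteq> 0" "(x \<bullet> v) *\<^sub>R x + c *\<^sub>R v = \<mu> *\<^sub>R v"
      by (auto simp: matrix_vector_mult_outer_plus_diag)
    have "((x \<bullet> v) *\<^sub>R x + c *\<^sub>R v) \<bullet> v = (\<mu> *\<^sub>R v) \<bullet> v" using v(2) by simp
    then have "(x \<bullet> v)\<^sup>2 + c * (v \<bullet> v) = \<mu> * (v \<bullet> v)"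
      by (simp only: inner_add_left inner_scaleR_left power2_eq_square)
    moreover have "v \<bullet> v > 0" using v(1) by simp
    ultimately have "c \<le> \<mu>"
      by (smt (verit) mult_le_cancel_right zero_le_power2)
    moreover have "\<mu> = c \<or> \<mu> = x \<bullet> x + c"
    proof (cases "x \<bullet> v = 0")
      case True
      then have "(c - \<mu>) *\<^sub>R v = 0" using v(2) by (simp add: algebra_simps)
      then show ?thesis using v(1) by simp
    next
      case False
      have "((x \<bullet> v) *\<^sub>R x + c *\<^sub>R v) \<bullet> x = (\<mu> *\<^sub>R v) \<bullet> x" using v(2) by simp
      then have "(x \<bullet> v) * (x \<bullet> x + c - \<mu>) = 0"
        by (simp add: inner_commute algebra_simps)
      then show ?thesis using False by simp
    qed
    ultimately show ?thesis by blast
  qed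
  have "?E \<noteq> {}"
  proof (cases "x = 0")
    case True
    have "?S *v axis undefined 1 = c *\<^sub>R axis undefined 1"
      by (subst matrix_vector_mult_outer_plus_diag) (simp add: True)
    moreover have "axis undefined 1 \<noteq> (0::real^'n)" by simp
    ultimately have "c \<in> ?E" by blast
    then show ?thesis by blast
  next
    case False
    have "?S *v x = (x \<bullet> x + c) *\<^sub>R x"
      by (subst matrix_vector_mult_outer_plus_diag) (simp add: algebra_simps)
    then have "x \<bullet> x + c \<in> ?E" using False by blast
    then show ?thesis by blast
  qed
  moreover have "finite ?E"
    by (rule finite_subset[of _ "{c, x \<bullet> x + c}"]) (use eigenvalue in auto)
  ultimately show ?thesis
    unfolding lambda_min_def using eigenvalue by simp
qed

lemma sinh_le_mult_cosh:
  assumes "(x::real) \<ge> 0" shows "sinh x \<le> x * cosh x"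
proof -
  have "(\<lambda>x. x * cosh x - sinh x) 0 \<le> (\<lambda>x. x * cosh x - sinh x) x"
  proof (rule DERIV_nonneg_imp_nondecreasing[OF assms])
    fix y :: real assume "0 \<le> y" "y \<le> x"
    then show "\<exists>d. ((\<lambda>x. x * cosh x - sinh x) has_real_derivative d) (at y) \<and> 0 \<le> d"
      by (intro exI[of _ "y * sinh y"]) (auto intro!: derivative_eq_intros)
  qed
  then show ?thesis by simp
qed

lemma ln_cosh_le:
  assumes "(x::real) \<ge> 0" shows "ln (cosh x) \<le> x\<^sup>2 / 2"
proof -
  have "(\<lambda>x. x\<^sup>2 / 2 - ln (cosh x)) 0 \<le> (\<lambda>x. x\<^sup>2 / 2 - ln (cosh x)) x"
  proof (rule DERIV_nonneg_imp_nondecreasing[OF assms])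
    fix y :: real assume "0 \<le> y" "y \<le> x"
    then have "sinh y / cosh y \<le> y"
      using sinh_le_mult_cosh[of y] by (simp add: divide_le_eq)
    then show "\<exists>d. ((\<lambda>x. x\<^sup>2 / 2 - ln (cosh x)) has_real_derivative d) (at y) \<and> 0 \<le> d"
      by (intro exI[of _ "y - sinh y / cosh y"] conjI) (auto intro!: derivative_eq_intros)
  qed
  then show ?thesis by simp
qed

lemma cosh_le_exp_half_square: "cosh (x::real) \<le> exp (x\<^sup>2 / 2)"
proof -
  have "cosh \<bar>x\<bar> = exp (ln (cosh \<bar>x\<bar>))" by simp
  also have "\<dots> \<le> exp (\<bar>x\<bar>\<^sup>2 / 2)"
    using ln_cosh_le[of "\<bar>x\<bar>"] by (simp only: exp_le_cancel_iff abs_ge_zero)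
  finally show ?thesis by (cases "x \<ge> 0") simp_all
qed

section \<open>Growth of the attacked trajectory\<close>

definition A_true :: "real^'n^'n::finite" where
  "A_true = 4 *\<^sub>R mat 1"

lemma A_true_mult: "A_true *v v = 4 *\<^sub>R v"
  by (simp add: A_true_def flip: scaleR_matrix_vector_assoc)

lemma onorm_A_true: "onorm (\<lambda>v::real^'n::finite. A_true *v v) = 4"
proof -
  have "onorm (\<lambda>v::real^'n. 4 *\<^sub>R v) = \<bar>4\<bar> * onorm (\<lambda>v::real^'n. v)"
    by (rule onorm_scaleR[OF bounded_linear_ident])
  then show ?thesis by (simp add: A_true_mult onorm_id)
qed

context
  fixes d :: "nat \<Rightarrow> 'a \<Rightarrow> real^'n::finite" and w :: 'a
  assumes d_zero_or_unit: "\<And>t. d t w = 0 \<or> norm (d t w) = 1"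
begin

abbreviation state :: "nat \<Rightarrow> real^'n" where
  "state t \<equiv> traj A_true (\<lambda>x. x) d t w"

lemma state_Suc: "state (Suc t) = 4 *\<^sub>R state t + d t w"
  by (simp add: A_true_mult)

lemma norm_state_Suc_ge: "4 * norm (state t) - 1 \<le> norm (state (Suc t))"
proof -
  have "norm (4 *\<^sub>R state t) - norm (- d t w) \<le> norm (state (Suc t))"
    using norm_triangle_ineq2[of "4 *\<^sub>R state t" "- d t w"] by (simp only: state_Suc) simp
  moreover have "norm (d t w) \<le> 1" using d_zero_or_unit[of t] by auto
  ultimately show ?thesis by simp
qed

lemma state_zero_or_dominant:
  "(\<forall>u\<le>t. state u = 0) \<or> (1 \<le> norm (state t) \<and> 2 * (\<Sum>u<t. norm (state u)) \<le> norm (state t))"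
proof (induction t)
  case (Suc t)
  then show ?case
  proof
    assume zero: "\<forall>u\<le>t. state u = 0"
    then have "state (Suc t) = d t w" by (simp add: state_Suc)
    moreover have "(\<Sum>u<Suc t. norm (state u)) = 0" using zero by simp
    ultimately show ?case using d_zero_or_unit[of t] zero le_Suc_eq by auto
  next
    assume "1 \<le> norm (state t) \<and> 2 * (\<Sum>u<t. norm (state u)) \<le> norm (state t)"
    then show ?case using norm_state_Suc_ge[of t] by simp
  qed
qed simp

lemma state_nonzero_after_attack: "k < t \<Longrightarrow> d k w \<noteq> 0 \<Longrightarrow> state t \<noteq> 0"
proof (induction t)
  case (Suc t)
  show ?case
  proof (cases "state t = 0")
    case True
    then have "k = t" using Suc by (metis less_SucE)
    then show ?thesis using True Suc.prems by (simp add: state_Suc)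
  next
    case False
    then have "1 \<le> norm (state t)" using state_zero_or_dominant[of t] by auto
    then show ?thesis using norm_state_Suc_ge[of t] by auto
  qed
qed simp

lemma cost_A_true: "cost A_true (\<lambda>x. x) d A_true T w = (\<Sum>t<T. norm (d t w))"
  by (simp add: cost_def)

lemma ex_cost_less_cost_A_true:
  assumes last: "d m w \<noteq> 0" and earlier: "k < m" "d k w \<noteq> 0"
  shows "\<exists>A. cost A_true (\<lambda>x. x) d A (Suc m) w < cost A_true (\<lambda>x. x) d A_true (Suc m) w"
proof -
  have x_m: "state m \<noteq> 0" using state_nonzero_after_attack[OF earlier] .
  then have norm_x_m: "norm (state m) > 0" by simp
  let ?N = "state m \<bullet> state m"
  have N_pos: "?N > 0" using x_m by simp
  text \<open>The rank-one correction absorbs the last attack completely and moves each earlier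
    residual by at most \<open>\<parallel>x\<^sub>t\<parallel> / \<parallel>x\<^sub>m\<parallel>\<close>; these ratios sum to less than 1.\<close>
  define A where "A = A_true + (1 / ?N) *\<^sub>R (\<chi> i j. d m w $ i * state m $ j)"
  define c where "c t = (state m \<bullet> state t) / ?N" for t
  have residual: "state (Suc t) - A *v state t = d t w - c t *\<^sub>R d m w" for t
    by (simp add: A_def c_def state_Suc matrix_vector_mult_add_rdistrib matrix_vector_mult_outer
        A_true_mult flip: scaleR_matrix_vector_assoc)
  have d_m: "norm (d m w) = 1" using d_zero_or_unit[of m] last by auto
  have c_m: "c m = 1" using N_pos by (simp add: c_def)
  have c_le: "\<bar>c t\<bar> \<le> norm (state t) / norm (state m)" for t
  proof -
    have "\<bar>state m \<bullet> state t\<bar> \<le> norm (state m) * norm (state t)" by (rule Cauchy_Schwarz_ineq2)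
    moreover have "?N = norm (state m) * norm (state m)"
      by (simp add: power2_norm_eq_inner power2_eq_square[symmetric])
    ultimately show ?thesis using x_m by (simp add: c_def abs_div field_simps)
  qed
  have "2 * (\<Sum>u<m. norm (state u)) \<le> norm (state m)"
    using state_zero_or_dominant[of m] x_m by auto
  then have dominant: "(\<Sum>u<m. norm (state u)) < norm (state m)"
    using norm_x_m by linarith
  have "cost A_true (\<lambda>x. x) d A (Suc m) w = (\<Sum>t<m. norm (d t w - c t *\<^sub>R d m w))"
    unfolding cost_def residual by (simp add: c_m)
  also have "\<dots> \<le> (\<Sum>t<m. norm (d t w) + norm (state t) / norm (state m))"
  proof (rule sum_mono)
    fix t
    have "norm (d t w - c t *\<^sub>R d m w) \<le> norm (d t w) + \<bar>c t\<bar>"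
      using norm_triangle_ineq4[of "d t w" "c t *\<^sub>R d m w"] d_m by simp
    then show "norm (d t w - c t *\<^sub>R d m w) \<le> norm (d t w) + norm (state t) / norm (state m)"
      using c_le[of t] by linarith
  qed
  also have "\<dots> = (\<Sum>t<m. norm (d t w)) + (\<Sum>t<m. norm (state t)) / norm (state m)"
    by (simp add: sum.distrib sum_divide_distrib)
  also have "\<dots> < (\<Sum>t<m. norm (d t w)) + 1"
    using dominant norm_x_m by (simp add: divide_less_eq)
  also have "\<dots> = cost A_true (\<lambda>x. x) d A_true (Suc m) w"
    by (simp add: cost_A_true d_m)
  finally show ?thesis by blast
qed

end

section \<open>The attack model\<close>

type_synonym 'n sample = "nat \<Rightarrow> real \<times> (real^'n)"

definition signed_axis :: "'n::finite \<times> bool \<Rightarrow> real^'n" where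
  "signed_axis z = (if snd z then 1 else -1) *\<^sub>R axis (fst z) 1"

definition gate :: "real \<times> (real^'n::finite) \<Rightarrow> real" where
  "gate z = (if fst z = 1 then 1 else 0)"

definition coin_sign :: "real \<times> (real^'n::finite) \<Rightarrow> real" where
  "coin_sign z = (if fst z = 1 then 1 else -1)"

text \<open>Off the support of its coordinate, \<open>direction\<close> is redirected to a fixed unit vector,
  so that \<open>\<parallel>direction z\<parallel> = 1\<close> holds everywhere and not only almost surely.\<close>
definition direction :: "real \<times> (real^'n::finite) \<Rightarrow> real^'n" where
  "direction z = (if snd z \<in> range signed_axis then snd z else axis undefined 1)"

definition coord_pmf :: "real \<Rightarrow> nat \<Rightarrow> (real \<times> (real^'n::finite)) pmf" where
  "coord_pmf p k =
     (if k mod 3 = 0 then map_pmf (\<lambda>b. (if b then 1 else 0, 0)) (bernoulli_pmf p)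
      else if k mod 3 = 1 then map_pmf (\<lambda>b. (if b then 1 else -1, 0)) (bernoulli_pmf (1/2))
      else map_pmf (\<lambda>z. (0, signed_axis z)) (pmf_of_set UNIV))"

abbreviation coords :: "real \<Rightarrow> nat set \<Rightarrow> 'n::finite sample measure" where
  "coords p K \<equiv> PiM K (\<lambda>k. measure_pmf (coord_pmf p k))"

abbreviation attack_space :: "real \<Rightarrow> 'n::finite sample measure" where
  "attack_space p \<equiv> coords p UNIV"

text \<open>The attack \<open>d\<^sub>t\<close> reads three independent coordinates of the sample: a Bernoulli(\<open>p\<close>)
  gate at \<open>3t\<close>, a Rademacher sign at \<open>3t + 1\<close> and a uniform signed unit vector \<open>\<plusminus>e\<^sub>k\<close> at
  \<open>3t + 2\<close>. The sample type \<open>nat \<Rightarrow> real \<times> real^n\<close> is the one fixed by the theorem, so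
  the gate and the sign are encoded in the real component.\<close>
definition attack :: "nat \<Rightarrow> 'n::finite sample \<Rightarrow> real^'n" where
  "attack t w = gate (w (3*t)) *\<^sub>R coin_sign (w (3*t+1)) *\<^sub>R direction (w (3*t+2))"

abbreviation history :: "real \<Rightarrow> nat \<Rightarrow> 'n::finite sample measure" where
  "history p t \<equiv> condalg (attack_space p) A_true (\<lambda>x. x) attack t"

lemma coord_pmf_gate: "coord_pmf p (3*t) = map_pmf (\<lambda>b. (if b then 1 else 0, 0)) (bernoulli_pmf p)"
  by (simp add: coord_pmf_def)

lemma coord_pmf_sign:
  "coord_pmf p (3*t+1) = map_pmf (\<lambda>b. (if b then 1 else -1, 0)) (bernoulli_pmf (1/2))"
proof -
  have "(3*t+1) mod 3 = (1::nat)" by presburger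
  then show ?thesis by (simp add: coord_pmf_def)
qed

lemma coord_pmf_direction:
  "coord_pmf p (3*t+2) = map_pmf (\<lambda>z. (0, signed_axis z)) (pmf_of_set UNIV)"
proof -
  have "(3*t+2) mod 3 = (2::nat)" by presburger
  then show ?thesis by (simp add: coord_pmf_def)
qed

lemma norm_direction: "norm (direction z) = 1"
  by (auto simp: direction_def signed_axis_def)

lemma abs_direction_component: "\<bar>direction z $ i\<bar> \<le> 1"
  using component_le_norm_cart[of "direction z" i] by (simp add: norm_direction)

lemma abs_coin_sign: "\<bar>coin_sign z\<bar> \<le> 1"
  by (simp add: coin_sign_def)

lemma gate_cases: "gate z = 0 \<or> gate z = 1"
  by (simp add: gate_def)

lemma attack_nonzero_iff: "attack t w \<noteq> 0 \<longleftrightarrow> gate (w (3*t)) = 1"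
  using norm_direction[of "w (3*t+2)"] by (auto simp: attack_def coin_sign_def gate_def)

lemma attack_eq_if_nonzero:
  "attack t w \<noteq> 0 \<Longrightarrow> attack t w = coin_sign (w (3*t+1)) *\<^sub>R direction (w (3*t+2))"
  by (subst (asm) attack_nonzero_iff) (simp add: attack_def)

lemma attack_zero_or_unit: "attack t w = 0 \<or> norm (attack t w) = 1"
  using gate_cases[of "w (3*t)"] by (auto simp: attack_def norm_direction coin_sign_def)

lemma prob_space_coords: "prob_space (coords p K)"
  by (rule prob_space_PiM) (simp add: prob_space_measure_pmf)

lemma measurable_coord:
  fixes g :: "real \<times> (real^'n::finite) \<Rightarrow> 'b::topological_space"
  shows "(\<lambda>w. g (w j)) \<in> borel_measurable (coords p K)"
proof (cases "j \<in> K")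
  case True
  show ?thesis
    by (rule measurable_compose[OF measurable_component_singleton[OF True]])
      simp
next
  case False
  then have "\<And>w. w \<in> space (coords p K) \<Longrightarrow> g (w j) = g undefined"
    by (auto simp: space_PiM PiE_def extensional_def)
  then show ?thesis by (subst measurable_cong[where g="\<lambda>_. g undefined"]) auto
qed

lemma borel_measurable_matrix_vector_mult:
  fixes F :: "'a \<Rightarrow> real^'n::finite"
  assumes "F \<in> borel_measurable N"
  shows "(\<lambda>w. (A::real^'n^'m::finite) *v F w) \<in> borel_measurable N"
proof -
  have "continuous_on UNIV ((*v) A)"
    by (rule linear_continuous_on) (simp add: linear_linear)
  then show ?thesis
    using measurable_compose[OF assms borel_measurable_continuous_onI] by (simp add: comp_def)
qed

lemma attack_measurable: "attack t \<in> borel_measurable (coords p K)"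
  unfolding attack_def by (intro borel_measurable_scaleR measurable_coord)

lemma traj_measurable: "traj A_true (\<lambda>x. x) attack s \<in> borel_measurable (coords p K)"
  by (induction s) (simp_all add: borel_measurable_add borel_measurable_matrix_vector_mult
      attack_measurable)

lemma traj_restrict:
  assumes "\<And>k. k < s \<Longrightarrow> {3*k, 3*k+1, 3*k+2} \<subseteq> K"
  shows "traj A_true (\<lambda>x. x) attack s (restrict w K) = traj A_true (\<lambda>x. x) attack s w"
  using assms by (induction s) (auto simp: attack_def)

section \<open>The history and the independence of future coordinates\<close>

lemma space_attack_space: "space (attack_space p) = UNIV"
  by (simp add: space_PiM)

definition history_generator :: "real \<Rightarrow> nat \<Rightarrow> 'n::finite sample set set" where
  "history_generator p t =
     {traj A_true (\<lambda>x. x) attack s -` B \<inter> space (attack_space p) | s B. s \<le> t \<and> B \<in> sets borel}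
     \<union> {{w \<in> space (attack_space p). attack t w \<noteq> 0}}"

lemma history_generator_subset: "history_generator p t \<subseteq> sets (attack_space p)"
proof -
  have "traj A_true (\<lambda>x. x) attack s -` B \<inter> space (attack_space p) \<in> sets (attack_space p)"
    if "B \<in> sets borel" for s and B :: "(real^'n) set"
    using measurable_sets[OF traj_measurable that] .
  moreover have "{w \<in> space (attack_space p). attack t w \<noteq> 0} \<in> sets (attack_space p)"
    using attack_measurable[of t UNIV p] by measurable
  ultimately show ?thesis unfolding history_generator_def by blast
qed

lemma sets_history: "sets (history p t) = sigma_sets (space (attack_space p)) (history_generator p t)"
  unfolding condalg_def history_generator_def[symmetric]
  by (rule sets_measure_of) (use history_generator_subset[of p t] sets.sets_into_space in blast)

lemma subalgebra_history: "subalgebra (attack_space p) (history p t)"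
  unfolding subalgebra_def sets_history
  using sets.sigma_sets_subset[OF history_generator_subset]
  by (simp add: condalg_def space_measure_of_conv)

lemma sets_history_subset_past:
  "sets (history p t :: 'n::finite sample measure)
     \<subseteq> sets (vimage_algebra (space (attack_space p)) (\<lambda>w. restrict w {..3*t}) (coords p {..3*t}))"
proof -
  let ?Y = "\<lambda>w::'n sample. restrict w {..3*t}"
  let ?V = "vimage_algebra (space (attack_space p)) ?Y (coords p {..3*t})"
  have "?Y \<in> measurable (attack_space p) (coords p {..3*t})"
    by (rule measurable_restrict_subset) simp
  then have Y: "?Y \<in> space (attack_space p) \<rightarrow> space (coords p {..3*t})"
    by (simp add: measurable_def)
  have "sigma_algebra (space (attack_space p)) (sets ?V)"
    using sets.sigma_algebra_axioms[of ?V] by simp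
  moreover have "history_generator p t \<subseteq> sets ?V"
  proof
    fix X :: "'n sample set" assume "X \<in> history_generator p t"
    then consider (traj) s and B :: "(real^'n) set"
        where "X = traj A_true (\<lambda>x. x) attack s -` B \<inter> space (attack_space p)" "s \<le> t" "B \<in> sets borel"
      | (attack) "X = {w \<in> space (attack_space p). attack t w \<noteq> 0}"
      unfolding history_generator_def by blast
    then show "X \<in> sets ?V"
    proof cases
      case traj
      have "X = ?Y -` (traj A_true (\<lambda>x. x) attack s -` B \<inter> space (coords p {..3*t}))
                \<inter> space (attack_space p)"
        using traj(2) Y by (auto simp: traj(1) traj_restrict[of s "{..3*t}"])
      moreover have "traj A_true (\<lambda>x. x) attack s -` B \<inter> space (coords p {..3*t})
          \<in> sets (coords p {..3*t})"
        using measurable_sets[OF traj_measurable traj(3)] .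
      ultimately show ?thesis unfolding sets_vimage_algebra2[OF Y] by blast
    next
      case attack
      have "X = ?Y -` {w \<in> space (coords p {..3*t}). gate (w (3*t)) = 1} \<inter> space (attack_space p)"
        using Y by (auto simp: attack attack_nonzero_iff)
      moreover have "{w \<in> space (coords p {..3*t}). gate (w (3*t)) = 1} \<in> sets (coords p {..3*t})"
        using measurable_coord[of gate "3*t" "{..3*t}" p] by measurable
      ultimately show ?thesis unfolding sets_vimage_algebra2[OF Y] by blast
    qed
  qed
  ultimately show ?thesis
    unfolding sets_history by (rule sigma_algebra.sigma_sets_subset)
qed

lemma gate_measurable_history: "(\<lambda>w. gate (w (3*t))) \<in> borel_measurable (history p t)"
proof -
  have event: "{w \<in> space (attack_space p). attack t w \<noteq> 0} \<in> sets (history p t)"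
    unfolding sets_history history_generator_def by (rule sigma_sets.Basic) blast
  have gate_eq: "(\<lambda>w. gate (w (3*t))) = indicator {w \<in> space (attack_space p). attack t w \<noteq> 0}"
    by (auto simp: fun_eq_iff space_attack_space attack_nonzero_iff gate_def)
  show ?thesis by (subst gate_eq) (rule borel_measurable_indicator[OF event])
qed

lemma indep_vars_coords:
  "prob_space.indep_vars (attack_space p) (\<lambda>k. measure_pmf (coord_pmf p k)) (\<lambda>k w. w k) UNIV"
proof -
  interpret prob_space "attack_space p" by (rule prob_space_coords)
  have rv: "random_variable (measure_pmf (coord_pmf p i)) (\<lambda>w. w i)" for i
    by (rule measurable_component_singleton) simp
  have distr: "distr (attack_space p) (measure_pmf (coord_pmf p i)) (\<lambda>x. x i) = measure_pmf (coord_pmf p i)" for i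
    by (rule distr_PiM_component) (simp_all add: prob_space_measure_pmf)
  have "distr (attack_space p) (attack_space p) (\<lambda>x. \<lambda>i\<in>UNIV. x i) = distr (attack_space p) (attack_space p) (\<lambda>x. x)"
    by (rule distr_cong) auto
  then have "distr (attack_space p) (attack_space p) (\<lambda>x. \<lambda>i\<in>UNIV. x i)
      = (\<Pi>\<^sub>M i\<in>UNIV. distr (attack_space p) (measure_pmf (coord_pmf p i)) (\<lambda>x. x i))"
    by (simp add: distr)
  then show ?thesis
    by (subst indep_vars_iff_distr_eq_PiM[OF _ rv]) simp_all
qed

lemma measure_coord:
  "measure (attack_space p) ((\<lambda>w. w i) -` S \<inter> space (attack_space p))
     = measure (measure_pmf (coord_pmf p i)) (S :: (real \<times> (real^'n::finite)) set)"
proof -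
  have "(\<lambda>w. w i) \<in> measurable (attack_space p) (measure_pmf (coord_pmf p i))"
    by (rule measurable_component_singleton) simp
  moreover have "distr (attack_space p) (measure_pmf (coord_pmf p i)) (\<lambda>x. x i) = measure_pmf (coord_pmf p i)"
    by (rule distr_PiM_component) (simp_all add: prob_space_measure_pmf)
  ultimately show ?thesis using measure_distr by (metis sets_measure_pmf UNIV_I)
qed

lemma integral_coord:
  fixes g :: "real \<times> (real^'n::finite) \<Rightarrow> real"
  shows "(\<integral>w. g (w k) \<partial>attack_space p) = (\<integral>z. g z \<partial>measure_pmf (coord_pmf p k))"
proof -
  have rv: "(\<lambda>w. w k) \<in> measurable (attack_space p) (measure_pmf (coord_pmf p k))"
    by (rule measurable_component_singleton) simp
  have distr: "distr (attack_space p) (measure_pmf (coord_pmf p k)) (\<lambda>x. x k) = measure_pmf (coord_pmf p k)"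
    by (rule distr_PiM_component) (simp_all add: prob_space_measure_pmf)
  have "(\<integral>z. g z \<partial>distr (attack_space p) (measure_pmf (coord_pmf p k)) (\<lambda>x. x k))
      = (\<integral>w. g (w k) \<partial>attack_space p)"
    by (rule integral_distr[OF rv]) (simp add: measurable_pmf_measure1)
  then show ?thesis by (simp only: distr)
qed

lemma integral_coord_product:
  fixes g h :: "real \<times> (real^'n::finite) \<Rightarrow> real"
  assumes "a \<noteq> b" and g: "\<And>z. \<bar>g z\<bar> \<le> c" and h: "\<And>z. \<bar>h z\<bar> \<le> c'"
  shows "(\<integral>w. g (w a) * h (w b) \<partial>attack_space p)
        = (\<integral>z. g z \<partial>measure_pmf (coord_pmf p a)) * (\<integral>z. h z \<partial>measure_pmf (coord_pmf p b))"
proof -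
  interpret prob_space "attack_space p" by (rule prob_space_coords)
  have "indep_var (coords p {a}) (\<lambda>w. restrict w {a}) (coords p {b}) (\<lambda>w. restrict w {b})"
    using indep_var_restrict[OF indep_vars_coords, of "{a}" "{b}"] assms(1) by simp
  from indep_var_compose[OF this measurable_coord[of g a] measurable_coord[of h b]]
  have indep: "indep_var borel (\<lambda>w. g (w a)) borel (\<lambda>w. h (w b))"
    by (simp add: comp_def)
  have "integrable (attack_space p) (\<lambda>w. g (w a))"
    by (rule integrable_const_bound[where B=c]) (simp_all add: g measurable_coord)
  moreover have "integrable (attack_space p) (\<lambda>w. h (w b))"
    by (rule integrable_const_bound[where B=c']) (simp_all add: h measurable_coord)
  ultimately show ?thesis
    using indep_var_lebesgue_integral[OF indep] by (simp add: integral_coord)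
qed

text \<open>The next two coordinates after the gate of time \<open>t\<close> are independent of the history.\<close>
lemma real_cond_exp_future:
  fixes g :: "real \<times> (real^'n::finite) \<Rightarrow> real \<times> (real^'n) \<Rightarrow> real"
  assumes g: "(\<lambda>w. g (w (3*t+1)) (w (3*t+2))) \<in> borel_measurable (coords p {3*t+1, 3*t+2})"
    and bounded: "\<And>z z'. \<bar>g z z'\<bar> \<le> c"
  shows "AE w in attack_space p. real_cond_exp (attack_space p) (history p t)
            (\<lambda>w. g (w (3*t+1)) (w (3*t+2))) w
         = (\<integral>w. g (w (3*t+1)) (w (3*t+2)) \<partial>attack_space p)"
proof -
  let ?F = "{3*t+1, 3*t+2}"
  interpret prob_space "attack_space p" by (rule prob_space_coords)
  have indep: "indep_var (coords p {..3*t}) (\<lambda>w. restrict w {..3*t}) (coords p ?F) (\<lambda>w. restrict w ?F)"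
    using indep_var_restrict[OF indep_vars_coords, of "{..3*t}" ?F] by auto
  have "(\<lambda>w. g (restrict w ?F (3*t+1)) (restrict w ?F (3*t+2))) \<in> borel_measurable (attack_space p)"
    using measurable_compose[OF measurable_restrict_subset g] by (simp add: comp_def)
  then have "integrable (attack_space p) (\<lambda>w. g (restrict w ?F (3*t+1)) (restrict w ?F (3*t+2)))"
    by (intro integrable_const_bound[where B=c]) (simp_all add: bounded)
  from real_cond_exp_indep_var[where h="\<lambda>w. g (w (3*t+1)) (w (3*t+2))" and Z="\<lambda>w. restrict w ?F",
      OF prob_space_coords subalgebra_history indep sets_history_subset_past g this]
  show ?thesis by simp
qed

section \<open>Conditional moments of the attack\<close>

lemma integral_coin_sign:
  fixes g :: "real \<Rightarrow> real"
  shows "(\<integral>z. g (coin_sign z) \<partial>measure_pmf (coord_pmf p (3*t+1) :: (real \<times> (real^'n::finite)) pmf))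
    = (g 1 + g (-1)) / 2"
  unfolding coord_pmf_sign by (simp add: integral_map_pmf integral_bernoulli_pmf coin_sign_def)

lemma integral_direction:
  fixes g :: "real^'n::finite \<Rightarrow> real"
  shows "(\<integral>z. g (direction z) \<partial>measure_pmf (coord_pmf p (3*t+2)))
    = (\<Sum>k\<in>UNIV. g (axis k 1) + g (- axis k 1)) / (2 * CARD('n))"
proof -
  have "(\<integral>z. g (direction z) \<partial>measure_pmf (coord_pmf p (3*t+2)))
      = (\<Sum>z\<in>UNIV. g (signed_axis z)) / card (UNIV :: ('n \<times> bool) set)"
    unfolding coord_pmf_direction by (simp add: integral_map_pmf integral_pmf_of_set direction_def)
  also have "(\<Sum>z\<in>UNIV. g (signed_axis z)) = (\<Sum>k\<in>UNIV. \<Sum>b\<in>UNIV. g (signed_axis (k, b)))"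
    by (simp add: sum.cartesian_product flip: UNIV_Times_UNIV)
  also have "\<dots> = (\<Sum>k\<in>UNIV. g (axis k 1) + g (- axis k 1))"
    by (simp add: UNIV_bool signed_axis_def add.commute)
  finally show ?thesis by (simp add: card_UNIV_bool)
qed

lemma integral_direction_component:
  "(\<integral>z. direction z $ i \<partial>measure_pmf (coord_pmf p (3*t+2) :: (real \<times> (real^'n::finite)) pmf)) = 0"
proof -
  have "(\<integral>z. direction z $ i \<partial>measure_pmf (coord_pmf p (3*t+2)))
      = (\<Sum>k\<in>UNIV. (axis k 1 :: real^'n) $ i + (- axis k 1 :: real^'n) $ i) / (2 * CARD('n))"
    by (rule integral_direction[where g="\<lambda>v. v $ i"])
  also have "(\<Sum>k\<in>UNIV. (axis k 1 :: real^'n) $ i + (- axis k 1 :: real^'n) $ i) = 0"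
    by (intro sum.neutral ballI) simp
  finally show ?thesis by simp
qed

lemma integral_direction_outer:
  "(\<integral>z. direction z $ i * direction z $ j
       \<partial>measure_pmf (coord_pmf p (3*t+2) :: (real \<times> (real^'n::finite)) pmf))
    = (if i = j then 1 / CARD('n) else 0)"
proof -
  have "(\<Sum>k\<in>UNIV. (axis k 1 :: real^'n) $ i * axis k 1 $ j + (- axis k 1 :: real^'n) $ i * (- axis k 1) $ j)
      = (\<Sum>k\<in>UNIV. if k = i \<and> k = j then 2 else 0)"
    by (rule sum.cong) (auto simp: axis_def)
  also have "\<dots> = (if i = j then 2 else 0)"
    by (cases "i = j") (simp_all add: sum.neutral)
  finally show ?thesis
    by (subst integral_direction[where g = "\<lambda>v. v $ i * v $ j"]) simp
qed

lemma real_cond_exp_history_const: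
  "AE w in attack_space p. real_cond_exp (attack_space p) (history p t) (\<lambda>w. c) w = c"
proof -
  interpret prob_space "attack_space p" by (rule prob_space_coords)
  interpret finite_measure_subalgebra "attack_space p" "history p t"
    by unfold_locales (rule subalgebra_history)
  show ?thesis by (rule real_cond_exp_F_meas) simp_all
qed

lemma real_cond_exp_coin_sign:
  fixes g :: "real \<times> (real^'n::finite) \<Rightarrow> real"
  assumes "\<And>z. \<bar>g z\<bar> \<le> c"
  shows "AE w in attack_space p. real_cond_exp (attack_space p) (history p t) (\<lambda>w. g (w (3*t+1))) w
           = (\<integral>z. g z \<partial>measure_pmf (coord_pmf p (3*t+1)))"
proof -
  have "AE w in attack_space p. real_cond_exp (attack_space p) (history p t)
          (\<lambda>w. (\<lambda>z z'. g z) (w (3*t+1)) (w (3*t+2))) w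
        = (\<integral>w. (\<lambda>z z'. g z) (w (3*t+1)) (w (3*t+2)) \<partial>attack_space p)"
    by (rule real_cond_exp_future[where c=c]) (simp_all add: assms measurable_coord)
  then show ?thesis by (simp add: integral_coord)
qed

lemma real_cond_exp_direction:
  fixes g :: "real \<times> (real^'n::finite) \<Rightarrow> real"
  assumes "\<And>z. \<bar>g z\<bar> \<le> c"
  shows "AE w in attack_space p. real_cond_exp (attack_space p) (history p t) (\<lambda>w. g (w (3*t+2))) w
           = (\<integral>z. g z \<partial>measure_pmf (coord_pmf p (3*t+2)))"
proof -
  have "AE w in attack_space p. real_cond_exp (attack_space p) (history p t)
          (\<lambda>w. (\<lambda>z z'. g z') (w (3*t+1)) (w (3*t+2))) w
        = (\<integral>w. (\<lambda>z z'. g z') (w (3*t+1)) (w (3*t+2)) \<partial>attack_space p)"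
    by (rule real_cond_exp_future[where c=c]) (simp_all add: assms measurable_coord)
  then show ?thesis by (simp add: integral_coord)
qed

lemma real_cond_exp_coin_sign_direction:
  fixes g h :: "real \<times> (real^'n::finite) \<Rightarrow> real"
  assumes g: "\<And>z. \<bar>g z\<bar> \<le> 1" and h: "\<And>z. \<bar>h z\<bar> \<le> 1"
  shows "AE w in attack_space p.
     real_cond_exp (attack_space p) (history p t) (\<lambda>w. g (w (3*t+1)) * h (w (3*t+2))) w
       = (\<integral>z. g z \<partial>measure_pmf (coord_pmf p (3*t+1))) * (\<integral>z. h z \<partial>measure_pmf (coord_pmf p (3*t+2)))"
proof -
  have "\<bar>g z * h z'\<bar> \<le> 1" for z z'
    using g[of z] h[of z'] by (simp add: abs_mult mult_le_one)
  then have "AE w in attack_space p. real_cond_exp (attack_space p) (history p t)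
          (\<lambda>w. (\<lambda>z z'. g z * h z') (w (3*t+1)) (w (3*t+2))) w
        = (\<integral>w. (\<lambda>z z'. g z * h z') (w (3*t+1)) (w (3*t+2)) \<partial>attack_space p)"
    by (intro real_cond_exp_future[where c=1] borel_measurable_times measurable_coord)
  moreover have "(\<integral>w. g (w (3*t+1)) * h (w (3*t+2)) \<partial>attack_space p)
      = (\<integral>z. g z \<partial>measure_pmf (coord_pmf p (3*t+1))) * (\<integral>z. h z \<partial>measure_pmf (coord_pmf p (3*t+2)))"
    by (rule integral_coord_product[where c=1 and c'=1]) (simp_all add: g h)
  ultimately show ?thesis by simp
qed

text \<open>The \<open>(i, j)\<close> entry of \<open>(x + s u) (x + s u)\<^sup>T - x x\<^sup>T\<close> for a sign \<open>s\<close>.\<close>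
definition outer_increment ::
    "real^'n::finite \<Rightarrow> 'n \<Rightarrow> 'n \<Rightarrow> real \<times> (real^'n) \<Rightarrow> real \<times> (real^'n) \<Rightarrow> real" where
  "outer_increment x i j z z' = x$i * (coin_sign z * direction z' $ j)
     + x$j * (coin_sign z * direction z' $ i) + direction z' $ i * direction z' $ j"

lemma abs_outer_increment_le: "\<bar>outer_increment x i j z z'\<bar> \<le> \<bar>x$i\<bar> + \<bar>x$j\<bar> + 1"
proof -
  have "\<bar>outer_increment x i j z z'\<bar> \<le> \<bar>x$i\<bar> * (\<bar>coin_sign z\<bar> * \<bar>direction z' $ j\<bar>)
      + \<bar>x$j\<bar> * (\<bar>coin_sign z\<bar> * \<bar>direction z' $ i\<bar>) + \<bar>direction z' $ i\<bar> * \<bar>direction z' $ j\<bar>"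
    unfolding outer_increment_def by (simp add: abs_mult[symmetric])
  also have "\<dots> \<le> \<bar>x$i\<bar> * (1 * 1) + \<bar>x$j\<bar> * (1 * 1) + 1 * 1"
    by (intro add_mono mult_mono abs_direction_component abs_coin_sign mult_nonneg_nonneg) simp_all
  finally show ?thesis by simp
qed

lemma measurable_outer_increment:
  "(\<lambda>w. outer_increment x i j (w a) (w b)) \<in> borel_measurable (coords p K)"
  unfolding outer_increment_def
  by (intro borel_measurable_add borel_measurable_times borel_measurable_const measurable_coord)

lemma attack_outer_eq:
  "(x + attack t w) $ i * (x + attack t w) $ j
     = x$i * x$j + gate (w (3*t)) * outer_increment x i j (w (3*t+1)) (w (3*t+2))"
proof -
  let ?s = "coin_sign (w (3*t+1))" and ?u = "direction (w (3*t+2)) $ i"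
    and ?v = "direction (w (3*t+2)) $ j"
  have "?s * ?s = 1" by (simp add: coin_sign_def)
  then have "(x$i + ?s * ?u) * (x$j + ?s * ?v) = x$i * x$j + outer_increment x i j (w (3*t+1)) (w (3*t+2))"
    by (simp add: outer_increment_def algebra_simps)
  then show ?thesis
    using gate_cases[of "w (3*t)"] by (auto simp: attack_def)
qed

lemma integral_outer_increment:
  fixes x :: "real^'n::finite"
  shows "(\<integral>w. outer_increment x i j (w (3*t+1)) (w (3*t+2)) \<partial>attack_space p)
    = (if i = j then 1 / CARD('n) else 0)"
proof -
  interpret prob_space "attack_space p" by (rule prob_space_coords)
  have sign_direction: "(\<integral>w. coin_sign (w (3*t+1)) * direction (w (3*t+2)) $ k \<partial>attack_space p) = 0" for k
    using integral_coord_product[of "3*t+1" "3*t+2" coin_sign 1 "\<lambda>z. direction z $ k" 1 p]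
      integral_direction_component[where i=k and p=p and t=t]
    by (simp add: abs_coin_sign abs_direction_component)
  have int_SX: "integrable (attack_space p) (\<lambda>w. coin_sign (w (3*t+1)) * direction (w (3*t+2)) $ k)" for k
    by (rule integrable_const_bound[where B=1])
      (simp add: abs_mult abs_coin_sign abs_direction_component mult_le_one,
        intro borel_measurable_times measurable_coord)
  have int_XX: "integrable (attack_space p) (\<lambda>w. direction (w (3*t+2)) $ i * direction (w (3*t+2)) $ j)"
    by (rule integrable_const_bound[where B=1])
      (simp add: abs_mult abs_direction_component mult_le_one,
        intro borel_measurable_times measurable_coord)
  have "(\<integral>w. outer_increment x i j (w (3*t+1)) (w (3*t+2)) \<partial>attack_space p)
      = x$i * (\<integral>w. coin_sign (w (3*t+1)) * direction (w (3*t+2)) $ j \<partial>attack_space p)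
        + x$j * (\<integral>w. coin_sign (w (3*t+1)) * direction (w (3*t+2)) $ i \<partial>attack_space p)
        + (\<integral>w. direction (w (3*t+2)) $ i * direction (w (3*t+2)) $ j \<partial>attack_space p)"
    unfolding outer_increment_def using int_SX[of i] int_SX[of j] int_XX by simp
  also have "\<dots> = (\<integral>w. direction (w (3*t+2)) $ i * direction (w (3*t+2)) $ j \<partial>attack_space p)"
    by (simp only: sign_direction)
  finally show ?thesis
    using integral_direction_outer[where p=p and t=t and i=i and j=j]
    by (simp add: integral_coord[where g="\<lambda>z. direction z $ i * direction z $ j"])
qed

text \<open>On the event \<open>d\<^sub>t \<noteq> 0\<close> (where \<open>gate = 1\<close>), this is \<open>x x\<^sup>T + I / n\<close>.\<close>
lemma real_cond_exp_attack_outer: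
  fixes x :: "real^'n::finite"
  shows "AE w in attack_space p.
     real_cond_exp (attack_space p) (history p t) (\<lambda>w. (x + attack t w) $ i * (x + attack t w) $ j) w
       = x$i * x$j + gate (w (3*t)) * (if i = j then 1 / CARD('n) else 0)"
proof -
  interpret prob_space "attack_space p" by (rule prob_space_coords)
  interpret finite_measure_subalgebra "attack_space p" "history p t"
    by unfold_locales (rule subalgebra_history)
  define H where "H w = outer_increment x i j (w (3*t+1)) (w (3*t+2))" for w :: "'n sample"
  have outer_eq: "(\<lambda>w. (x + attack t w) $ i * (x + attack t w) $ j) = (\<lambda>w. x$i * x$j + gate (w (3*t)) * H w)"
    unfolding H_def attack_outer_eq ..
  have integral_H: "(\<integral>w. H w \<partial>attack_space p) = (if i = j then 1 / CARD('n) else 0)"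
    unfolding H_def by (rule integral_outer_increment)
  have H_measurable: "H \<in> borel_measurable (attack_space p)"
    unfolding H_def by (rule measurable_outer_increment)
  have integrable_gate_H: "integrable (attack_space p) (\<lambda>w. gate (w (3*t)) * H w)"
    by (rule integrable_const_bound[where B="\<bar>x$i\<bar> + \<bar>x$j\<bar> + 1"])
      (simp add: H_def abs_mult abs_outer_increment_le gate_def,
        intro borel_measurable_times measurable_coord H_measurable)
  have "AE w in attack_space p. real_cond_exp (attack_space p) (history p t) H w = (\<integral>w. H w \<partial>attack_space p)"
    unfolding H_def
    by (rule real_cond_exp_future[where g="outer_increment x i j", OF measurable_outer_increment
        abs_outer_increment_le])
  moreover have "AE w in attack_space p. real_cond_exp (attack_space p) (history p t)
        (\<lambda>w. x$i * x$j + gate (w (3*t)) * H w) w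
      = real_cond_exp (attack_space p) (history p t) (\<lambda>w. x$i * x$j) w
        + real_cond_exp (attack_space p) (history p t) (\<lambda>w. gate (w (3*t)) * H w) w"
    by (rule real_cond_exp_add) (simp_all add: integrable_gate_H)
  moreover have "AE w in attack_space p. real_cond_exp (attack_space p) (history p t) (\<lambda>w. gate (w (3*t)) * H w) w
      = gate (w (3*t)) * real_cond_exp (attack_space p) (history p t) H w"
    by (rule real_cond_exp_mult[OF gate_measurable_history H_measurable integrable_gate_H])
  moreover note real_cond_exp_history_const[of p t "x$i * x$j"]
  ultimately show ?thesis
    unfolding outer_eq by eventually_elim (simp add: integral_H)
qed

lemma attack_second_moment_lambda_min:
  fixes x :: "real^'n::finite"
  shows "cond_on (attack_space p) (\<lambda>w. attack t w \<noteq> 0)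
    (\<lambda>w. lambda_min (\<chi> i j. real_cond_exp (attack_space p) (history p t)
       (\<lambda>w. (x + attack t w) $ i * (x + attack t w) $ j) w) \<ge> (sqrt (1 / CARD('n)))\<^sup>2)"
proof -
  have "AE w in attack_space p. \<forall>i\<in>UNIV. \<forall>j\<in>UNIV.
      real_cond_exp (attack_space p) (history p t) (\<lambda>w. (x + attack t w) $ i * (x + attack t w) $ j) w
        = x$i * x$j + gate (w (3*t)) * (if i = j then 1 / CARD('n) else 0)"
    by (intro AE_finite_allI real_cond_exp_attack_outer) simp_all
  then show ?thesis
    unfolding cond_on_def
  proof eventually_elim
    case (elim w)
    show ?case
    proof
      assume "attack t w \<noteq> 0"
      then have "gate (w (3*t)) = 1" by (simp only: attack_nonzero_iff)
      then have "(\<chi> i j. real_cond_exp (attack_space p) (history p t)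
            (\<lambda>w. (x + attack t w) $ i * (x + attack t w) $ j) w)
          = (\<chi> i j. x$i * x$j + (if i = j then 1 / CARD('n) else 0))"
        using elim by (simp add: vec_eq_iff)
      then show "lambda_min (\<chi> i j. real_cond_exp (attack_space p) (history p t)
            (\<lambda>w. (x + attack t w) $ i * (x + attack t w) $ j) w) \<ge> (sqrt (1 / CARD('n)))\<^sup>2"
        using lambda_min_outer_plus_diag_ge[where x=x and c="1 / CARD('n)"] by simp
    qed
  qed
qed

lemma cond_on_AE: "AE w in M. P w \<Longrightarrow> cond_on M B P"
  unfolding cond_on_def by auto

lemma cond_indep_on_coin_sign_direction:
  "cond_indep_on (attack_space p) (history p t) (\<lambda>w. attack t w \<noteq> 0)
     (\<lambda>w. coin_sign (w (3*t+1))) (\<lambda>w :: 'n::finite sample. direction (w (3*t+2)))"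
  unfolding cond_indep_on_def
proof (intro ballI cond_on_AE)
  fix S :: "real set" and U :: "(real^'n) set"
  have indicator_abs: "\<bar>indicator X z :: real\<bar> \<le> 1" for X and z :: "real \<times> (real^'n)"
    by (simp add: indicator_def)
  have indicator_eqs:
    "(\<lambda>w. indicator ((\<lambda>w. coin_sign (w (3*t+1))) -` S) w * indicator ((\<lambda>w. direction (w (3*t+2))) -` U) w)
      = (\<lambda>w. indicator (coin_sign -` S) (w (3*t+1)) * (indicator (direction -` U) (w (3*t+2)) :: real))"
    "indicator ((\<lambda>w. coin_sign (w (3*t+1))) -` S) = (\<lambda>w. indicator (coin_sign -` S) (w (3*t+1)) :: real)"
    "indicator ((\<lambda>w. direction (w (3*t+2))) -` U) = (\<lambda>w. indicator (direction -` U) (w (3*t+2)) :: real)"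
    by (simp_all add: fun_eq_iff indicator_def)
  have "AE w in attack_space p. real_cond_exp (attack_space p) (history p t)
      (\<lambda>w. indicator (coin_sign -` S) (w (3*t+1)) * indicator (direction -` U) (w (3*t+2))) w
    = (\<integral>z. indicator (coin_sign -` S) z \<partial>measure_pmf (coord_pmf p (3*t+1) :: (real \<times> (real^'n)) pmf))
      * (\<integral>z. indicator (direction -` U) z \<partial>measure_pmf (coord_pmf p (3*t+2)))"
    by (rule real_cond_exp_coin_sign_direction) (rule indicator_abs)+
  moreover have "AE w in attack_space p. real_cond_exp (attack_space p) (history p t)
      (\<lambda>w :: 'n sample. indicator (coin_sign -` S) (w (3*t+1))) w
    = (\<integral>z. indicator (coin_sign -` S) z \<partial>measure_pmf (coord_pmf p (3*t+1) :: (real \<times> (real^'n)) pmf))"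
    by (rule real_cond_exp_coin_sign[where c=1]) (rule indicator_abs)
  moreover have "AE w in attack_space p. real_cond_exp (attack_space p) (history p t)
      (\<lambda>w. indicator (direction -` U) (w (3*t+2))) w
    = (\<integral>z. indicator (direction -` U) z \<partial>measure_pmf (coord_pmf p (3*t+2)))"
    by (rule real_cond_exp_direction[where c=1]) (rule indicator_abs)
  ultimately show "AE w in attack_space p.
      real_cond_exp (attack_space p) (history p t)
        (\<lambda>w. indicator ((\<lambda>w. coin_sign (w (3*t+1))) -` S) w * indicator ((\<lambda>w. direction (w (3*t+2))) -` U) w) w
      = real_cond_exp (attack_space p) (history p t) (indicator ((\<lambda>w. coin_sign (w (3*t+1))) -` S)) w
        * real_cond_exp (attack_space p) (history p t) (indicator ((\<lambda>w. direction (w (3*t+2))) -` U)) w"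
    unfolding indicator_eqs by eventually_elim simp
qed

lemma real_cond_exp_exp_coin_sign:
  "AE w in attack_space p. real_cond_exp (attack_space p) (history p t)
     (\<lambda>w :: 'n::finite sample. exp (s * coin_sign (w (3*t+1)))) w = cosh s"
proof -
  have bounded: "\<bar>exp (s * coin_sign z)\<bar> \<le> exp \<bar>s\<bar>" for z :: "real \<times> (real^'n)"
    by (simp add: coin_sign_def abs_if)
  have "(\<integral>z. exp (s * coin_sign z) \<partial>measure_pmf (coord_pmf p (3*t+1) :: (real \<times> (real^'n)) pmf))
      = cosh s"
    using integral_coin_sign[where g="\<lambda>x. exp (s * x)" and p=p and t=t] by (simp add: cosh_def)
  then show ?thesis
    using real_cond_exp_coin_sign[where g="\<lambda>z::real \<times> (real^'n). exp (s * coin_sign z)"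
        and c="exp \<bar>s\<bar>" and p=p and t=t, OF bounded]
    by simp
qed

text \<open>The factor \<open>\<ell>\<^sub>t\<close> is a Rademacher sign, which is sub-Gaussian with parameter 1 because
  \<open>E exp (s \<ell>\<^sub>t) = cosh s \<le> exp (s\<^sup>2 / 2)\<close>.\<close>
lemma attack_decomposition:
  "\<exists>(ell :: 'n::finite sample \<Rightarrow> real) (hhat :: 'n sample \<Rightarrow> real^'n).
       ell \<in> borel_measurable (attack_space p) \<and> hhat \<in> borel_measurable (attack_space p)
     \<and> cond_on (attack_space p) (\<lambda>w. attack t w \<noteq> 0) (\<lambda>w. attack t w = ell w *\<^sub>R hhat w)
     \<and> cond_indep_on (attack_space p) (history p t) (\<lambda>w. attack t w \<noteq> 0) ell hhat
     \<and> cond_on (attack_space p) (\<lambda>w. attack t w \<noteq> 0) (\<lambda>w. norm (hhat w) = 1)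
     \<and> (\<forall>i. cond_on (attack_space p) (\<lambda>w. attack t w \<noteq> 0)
             (\<lambda>w. real_cond_exp (attack_space p) (history p t) (\<lambda>w. hhat w $ i) w = 0))
     \<and> integrable (attack_space p) ell
     \<and> cond_on (attack_space p) (\<lambda>w. attack t w \<noteq> 0)
         (\<lambda>w. real_cond_exp (attack_space p) (history p t) ell w = 0)
     \<and> (\<forall>s. integrable (attack_space p) (\<lambda>w. exp (s * ell w))
           \<and> cond_on (attack_space p) (\<lambda>w. attack t w \<noteq> 0)
               (\<lambda>w. real_cond_exp (attack_space p) (history p t) (\<lambda>w. exp (s * ell w)) w
                    \<le> exp (1\<^sup>2 * s\<^sup>2 / 2)))"
  (is "\<exists>ell hhat. ?decomposition ell hhat")
proof -
  interpret prob_space "attack_space p" by (rule prob_space_coords)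
  let ?ell = "\<lambda>w :: 'n sample. coin_sign (w (3*t+1))"
  let ?hhat = "\<lambda>w :: 'n sample. direction (w (3*t+2))"
  have "?decomposition ?ell ?hhat"
  proof (intro conjI allI)
    show "?ell \<in> borel_measurable (attack_space p)" "?hhat \<in> borel_measurable (attack_space p)"
      by (rule measurable_coord)+
    show "cond_on (attack_space p) (\<lambda>w. attack t w \<noteq> 0) (\<lambda>w. attack t w = ?ell w *\<^sub>R ?hhat w)"
      unfolding cond_on_def by (intro AE_I2 impI) (rule attack_eq_if_nonzero)
    show "cond_indep_on (attack_space p) (history p t) (\<lambda>w. attack t w \<noteq> 0) ?ell ?hhat"
      by (rule cond_indep_on_coin_sign_direction)
    show "cond_on (attack_space p) (\<lambda>w. attack t w \<noteq> 0) (\<lambda>w. norm (?hhat w) = 1)"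
      unfolding cond_on_def by (simp add: norm_direction)
    show "cond_on (attack_space p) (\<lambda>w. attack t w \<noteq> 0)
        (\<lambda>w. real_cond_exp (attack_space p) (history p t) (\<lambda>w. ?hhat w $ i) w = 0)" for i
      using real_cond_exp_direction[of "\<lambda>z. direction z $ i" 1 p t]
        integral_direction_component[where i=i and p=p and t=t]
      by (intro cond_on_AE) (simp add: abs_direction_component)
    show "integrable (attack_space p) ?ell"
      by (rule integrable_const_bound[where B=1]) (simp_all add: abs_coin_sign measurable_coord)
    show "cond_on (attack_space p) (\<lambda>w. attack t w \<noteq> 0)
        (\<lambda>w. real_cond_exp (attack_space p) (history p t) ?ell w = 0)"
      using real_cond_exp_coin_sign[where g="coin_sign :: real \<times> (real^'n) \<Rightarrow> real" and c=1 and p=p and t=t]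
        integral_coin_sign[where g="\<lambda>x. x" and p=p and t=t, where 'n='n]
      by (intro cond_on_AE) (simp add: abs_coin_sign)
    show "integrable (attack_space p) (\<lambda>w. exp (s * ?ell w))" for s
      by (rule integrable_const_bound[where B="exp \<bar>s\<bar>"])
        (simp_all add: coin_sign_def abs_if measurable_coord)
    show "cond_on (attack_space p) (\<lambda>w. attack t w \<noteq> 0)
        (\<lambda>w. real_cond_exp (attack_space p) (history p t) (\<lambda>w. exp (s * ?ell w)) w \<le> exp (1\<^sup>2 * s\<^sup>2 / 2))" for s
      using real_cond_exp_exp_coin_sign[of p t s] cosh_le_exp_half_square[of s]
      by (intro cond_on_AE) (auto elim: eventually_mono)
  qed
  then show ?thesis by blast
qed

section \<open>Probability that the true matrix is not a minimizer\<close>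

lemma measure_gate_pmf:
  assumes "0 \<le> p" "p \<le> 1"
  shows "measure (measure_pmf (coord_pmf p (3*j) :: (real \<times> (real^'n::finite)) pmf)) {z. fst z = 1} = p"
    and "measure (measure_pmf (coord_pmf p (3*j) :: (real \<times> (real^'n::finite)) pmf)) {z. fst z \<noteq> 1} = 1 - p"
proof -
  have "(\<lambda>b. (if b then 1 else 0, 0::real^'n)) -` {z. fst z = (1::real)} = {True}"
    and "(\<lambda>b. (if b then 1 else 0, 0::real^'n)) -` {z. fst z \<noteq> (1::real)} = {False}"
    by auto
  then show "measure (measure_pmf (coord_pmf p (3*j) :: (real \<times> (real^'n)) pmf)) {z. fst z = 1} = p"
    and "measure (measure_pmf (coord_pmf p (3*j) :: (real \<times> (real^'n)) pmf)) {z. fst z \<noteq> 1} = 1 - p"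
    using assms by (simp_all add: coord_pmf_gate measure_map_pmf measure_pmf_single)
qed

lemma measure_gates:
  assumes "finite J" "J \<noteq> {}"
  shows "measure (attack_space p :: 'n::finite sample measure)
      (\<Inter>j\<in>J. (\<lambda>w. w (3*j)) -` S j \<inter> space (attack_space p))
     = (\<Prod>j\<in>J. measure (measure_pmf (coord_pmf p (3*j))) (S j))"
proof -
  interpret prob_space "attack_space p :: 'n sample measure" by (rule prob_space_coords)
  have "prob (\<Inter>i\<in>(\<lambda>j. 3*j) ` J. (\<lambda>w. w i) -` S (i div 3) \<inter> space (attack_space p))
      = (\<Prod>i\<in>(\<lambda>j. 3*j) ` J. prob ((\<lambda>w. w i) -` S (i div 3) \<inter> space (attack_space p)))"
    by (rule indep_varsD[OF indep_vars_coords]) (use assms in auto)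
  moreover have "(\<Inter>i\<in>(\<lambda>j. 3*j) ` J. (\<lambda>w. w i) -` S (i div 3) \<inter> space (attack_space p))
      = (\<Inter>j\<in>J. (\<lambda>w. w (3*j)) -` S j \<inter> space (attack_space p))"
    by auto
  moreover have "inj_on (\<lambda>j::nat. 3*j) J" by (auto simp: inj_on_def)
  ultimately show ?thesis
    by (simp add: prod.reindex measure_coord)
qed

lemma attack_event_eq:
  "{w \<in> space (attack_space p). attack t w \<noteq> 0}
     = (\<lambda>w. w (3*t)) -` {z. fst z = 1} \<inter> space (attack_space p :: 'n::finite sample measure)"
  by (auto simp: attack_nonzero_iff gate_def)

lemma prob_attack_event:
  assumes "0 \<le> p" "p \<le> 1"
  shows "measure (attack_space p) {w \<in> space (attack_space p). attack t w \<noteq> (0::real^'n::finite)} = p"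
  unfolding attack_event_eq measure_coord using measure_gate_pmf(1)[OF assms, where 'n='n] by simp

lemma indep_attack_events:
  assumes "0 \<le> p" "p \<le> 1"
  shows "prob_space.indep_events (attack_space p)
     (\<lambda>t. {w \<in> space (attack_space p). attack t w \<noteq> (0::real^'n::finite)}) UNIV"
proof -
  interpret prob_space "attack_space p :: 'n sample measure" by (rule prob_space_coords)
  show ?thesis
    unfolding indep_events_def
  proof (intro conjI allI impI)
    have "{w \<in> space (attack_space p). attack t w \<noteq> 0} \<in> events" for t
      using attack_measurable[of t UNIV p] by measurable
    then show "(\<lambda>t. {w \<in> space (attack_space p). attack t w \<noteq> 0}) ` UNIV \<subseteq> events"
      by auto
    fix J :: "nat set" assume J: "J \<subseteq> UNIV" "J \<noteq> {}" "finite J"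
    have "prob (\<Inter>j\<in>J. {w \<in> space (attack_space p). attack j w \<noteq> 0})
        = (\<Prod>j\<in>J. measure (measure_pmf (coord_pmf p (3*j) :: (real \<times> (real^'n)) pmf)) {z. fst z = 1})"
      unfolding attack_event_eq by (rule measure_gates) (use J in auto)
    also have "\<dots> = (\<Prod>j\<in>J. prob {w \<in> space (attack_space p). attack j w \<noteq> 0})"
      by (simp add: measure_gate_pmf(1)[OF assms] prob_attack_event[OF assms])
    finally show "prob (\<Inter>j\<in>J. {w \<in> space (attack_space p). attack j w \<noteq> 0})
        = (\<Prod>j\<in>J. prob {w \<in> space (attack_space p). attack j w \<noteq> 0})" .
  qed
qed

lemma continuous_on_cost: "continuous_on UNIV (\<lambda>A. cost Abar f d A T w)"
proof -
  have "continuous_on UNIV (\<lambda>A::real^'m::finite^'n::finite. A *v y)" for y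
    by (intro linear_continuous_on bounded_linearI')
      (simp_all add: matrix_vector_mult_add_rdistrib scaleR_matrix_vector_assoc)
  then show ?thesis unfolding cost_def by (intro continuous_intros)
qed

lemma sets_not_minimizer:
  "{w \<in> space (attack_space p).
      \<not> (\<forall>A. cost A_true (\<lambda>x. x) attack A_true T w \<le> cost A_true (\<lambda>x. x) attack A T w)}
     \<in> sets (attack_space p :: 'n::finite sample measure)"
proof -
  have "(\<lambda>w. traj A_true (\<lambda>x. x) attack (Suc t) w - A *v traj A_true (\<lambda>x. x) attack t w)
      \<in> borel_measurable (attack_space p :: 'n sample measure)" for A t
    by (intro borel_measurable_diff borel_measurable_matrix_vector_mult traj_measurable)
  then have cost: "(\<lambda>w. cost A_true (\<lambda>x. x) attack A T w) \<in> borel_measurable (attack_space p :: 'n sample measure)" for A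
    unfolding cost_def by (intro borel_measurable_sum measurable_compose[OF _ borel_measurable_norm])
  have "{w \<in> space (attack_space p). \<exists>A. cost A_true (\<lambda>x. x) attack A T w < cost A_true (\<lambda>x. x) attack A_true T w}
      \<in> sets (attack_space p :: 'n sample measure)"
    by (rule sets_Collect_ex_less_continuous[OF cost continuous_on_cost cost])
  then show ?thesis by (simp add: not_le)
qed

lemma prob_not_minimizer_ge:
  assumes p: "0 < p" "p < 1" and T: "T \<ge> 1"
  shows "measure (attack_space p :: 'n::finite sample measure)
      {w \<in> space (attack_space p).
         \<not> (\<forall>A. cost A_true (\<lambda>x. x) attack A_true T w \<le> cost A_true (\<lambda>x. x) attack A T w)}
     \<ge> p * (1 - (1 - p) ^ (T - 1))"
proof (cases "T = 1")
  case False
  interpret prob_space "attack_space p :: 'n sample measure" by (rule prob_space_coords)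
  define m where "m = T - 1"
  have T_eq: "T = Suc m" and "m \<ge> 1" using False T by (simp_all add: m_def)
  text \<open>Abar fails to minimize the cost if step \<open>m\<close> and some earlier step are attacked,
    i.e. on \<open>last_attack - only_last\<close>.\<close>
  define S where "S j = (if j = m then {z::real \<times> (real^'n). fst z = 1} else {z. fst z \<noteq> 1})" for j
  define last_attack where "last_attack = (\<lambda>w. w (3*m)) -` {z::real \<times> (real^'n). fst z = 1} \<inter> space (attack_space p)"
  define only_last where "only_last = (\<Inter>j\<in>{..m}. (\<lambda>w. w (3*j)) -` S j \<inter> space (attack_space p))"
  have coord_event: "(\<lambda>w. w i) -` X \<inter> space (attack_space p) \<in> events" for i X
    by (rule measurable_sets[OF measurable_component_singleton]) simp_all
  have events: "last_attack \<in> events" "only_last \<in> events"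
    unfolding last_attack_def only_last_def by (intro sets.finite_INT coord_event; simp)+
  have "only_last \<subseteq> last_attack" unfolding last_attack_def only_last_def S_def by auto
  then have "prob (last_attack - only_last) = prob last_attack - prob only_last"
    using events by (rule finite_measure_Diff[rotated 2])
  also have "prob last_attack = p"
    unfolding last_attack_def measure_coord using measure_gate_pmf(1)[where 'n='n] p by simp
  also have "prob only_last = p * (1 - p) ^ m"
  proof -
    have "prob only_last = (\<Prod>j\<in>insert m {..<m}. measure (measure_pmf (coord_pmf p (3*j))) (S j))"
      unfolding only_last_def by (subst measure_gates) (auto simp: lessThan_Suc_atMost[symmetric])
    also have "\<dots> = p * (\<Prod>j\<in>{..<m}. 1 - p)"
      using measure_gate_pmf[where 'n='n] p by (simp add: S_def)
    finally show ?thesis by simp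
  qed
  finally have prob_eq: "prob (last_attack - only_last) = p * (1 - (1 - p) ^ (T - 1))"
    by (simp add: m_def algebra_simps)
  have "last_attack - only_last
      \<subseteq> {w \<in> space (attack_space p).
           \<not> (\<forall>A. cost A_true (\<lambda>x. x) attack A_true T w \<le> cost A_true (\<lambda>x. x) attack A T w)}"
  proof
    fix w assume w: "w \<in> last_attack - only_last"
    then have "attack m w \<noteq> 0" by (simp add: last_attack_def attack_nonzero_iff gate_def)
    moreover from w obtain k where "k < m" "fst (w (3*k)) = 1"
      by (auto simp: last_attack_def only_last_def S_def nat_less_le split: if_splits)
    then have "k < m" "attack k w \<noteq> 0" by (simp_all add: attack_nonzero_iff gate_def)
    ultimately show "w \<in> {w \<in> space (attack_space p).
           \<not> (\<forall>A. cost A_true (\<lambda>x. x) attack A_true T w \<le> cost A_true (\<lambda>x. x) attack A T w)}"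
      using ex_cost_less_cost_A_true[of attack w, OF attack_zero_or_unit]
      by (auto simp: T_eq not_le space_PiM)
  qed
  then have "prob (last_attack - only_last) \<le> prob {w \<in> space (attack_space p).
      \<not> (\<forall>A. cost A_true (\<lambda>x. x) attack A_true T w \<le> cost A_true (\<lambda>x. x) attack A T w)}"
    by (rule finite_measure_mono[OF _ sets_not_minimizer])
  with prob_eq show ?thesis by simp
qed simp

theorem theorem6:
  fixes p :: real
  assumes "0 < p" and "p < 1"
  shows "\<exists>(Abar :: real^'n^'n) (f :: real^'n \<Rightarrow> real^'n)
           (M :: (nat \<Rightarrow> real \<times> (real^'n)) measure) (d :: nat \<Rightarrow> (nat \<Rightarrow> real \<times> (real^'n)) \<Rightarrow> real^'n)
           (lam :: real) (L :: real) (sig :: real).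
     prob_space M \<and> (\<forall>t. d t \<in> borel_measurable M)
     \<comment> \<open>probabilistic attack model\<close>
     \<and> (\<forall>t. measure M {w \<in> space M. d t w \<noteq> 0} = p)
     \<and> prob_space.indep_events M (\<lambda>t. {w \<in> space M. d t w \<noteq> 0}) UNIV
     \<comment> \<open>(A3)\<close>
     \<and> lam > 0
     \<and> (\<forall>t x. cond_on M (\<lambda>w. d t w \<noteq> 0)
           (\<lambda>w. lambda_min (\<chi> i j. real_cond_exp M (condalg M Abar f d t)
                   (\<lambda>w. f (x + d t w) $ i * f (x + d t w) $ j) w) \<ge> lam\<^sup>2))
     \<comment> \<open>(A4)\<close>
     \<and> f 0 = 0 \<and> L-lipschitz_on UNIV f
     \<comment> \<open>(A6)\<close>
     \<and> (\<forall>t. \<exists>(ell :: _ \<Rightarrow> real) (hhat :: _ \<Rightarrow> real^'n).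
           ell \<in> borel_measurable M \<and> hhat \<in> borel_measurable M
         \<and> cond_on M (\<lambda>w. d t w \<noteq> 0) (\<lambda>w. d t w = ell w *\<^sub>R hhat w)
         \<and> cond_indep_on M (condalg M Abar f d t) (\<lambda>w. d t w \<noteq> 0) ell hhat
         \<and> cond_on M (\<lambda>w. d t w \<noteq> 0) (\<lambda>w. norm (hhat w) = 1)
         \<and> (\<forall>i. cond_on M (\<lambda>w. d t w \<noteq> 0)
                 (\<lambda>w. real_cond_exp M (condalg M Abar f d t) (\<lambda>w. hhat w $ i) w = 0))
         \<and> integrable M ell
         \<and> cond_on M (\<lambda>w. d t w \<noteq> 0) (\<lambda>w. real_cond_exp M (condalg M Abar f d t) ell w = 0)
         \<and> (\<forall>s. integrable M (\<lambda>w. exp (s * ell w))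
               \<and> cond_on M (\<lambda>w. d t w \<noteq> 0)
                   (\<lambda>w. real_cond_exp M (condalg M Abar f d t) (\<lambda>w. exp (s * ell w)) w
                        \<le> exp (sig\<^sup>2 * s\<^sup>2 / 2))))
     \<comment> \<open>stability condition violated\<close>
     \<and> L > 0 \<and> onorm (\<lambda>v. Abar *v v) \<ge> 1 / L
     \<comment> \<open>conclusion\<close>
     \<and> (\<forall>T::nat. T \<ge> 1 \<longrightarrow>
          measure M {w \<in> space M. \<not> (\<forall>A. cost Abar f d Abar T w \<le> cost Abar f d A T w)}
            \<ge> p * (1 - (1 - p) ^ (T - 1)))"
proof -
  have p: "0 \<le> p" "p \<le> 1" using assms by simp_all
  show ?thesis
  proof (rule exI[of _ A_true], rule exI[of _ "\<lambda>x. x"], rule exI[of _ "attack_space p"],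
      rule exI[of _ attack], rule exI[of _ "sqrt (1 / CARD('n))"], rule exI[of _ 1], rule exI[of _ 1],
      intro conjI allI impI)
  qed (fact prob_space_coords attack_measurable prob_attack_event[OF p] indep_attack_events[OF p]
      attack_second_moment_lambda_min attack_decomposition lipschitz_on_id prob_not_minimizer_ge[OF assms]
    | simp add: onorm_A_true)+
qed

end
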